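(* Let $\Bbbk$ be a unital ring and $n,r$ positive integers. Let $\Lambda$ be a set-partition of $\{1,\dots,r\}$ and $\Lambda'$ a set-partition of $\{1,\dots,r+1\}$, each with at most $n$ parts. Then (a) $\mathbf V(\Lambda)\cong H_n(\ell(\Lambda))$ as left $\Bbbk W_n$-modules; (b) $\mathbf V'(\Lambda')\cong H_{n-1}(\ell(\Lambda')-1)$ as left $\Bbbk W_{n-1}$-modules.
   Context: $\mathbf V$ is a free $\Bbbk$-module with basis $\mathbf v_1,\dots,\mathbf v_n$; $W_n$ (symmetric group on $\{1,\dots,n\}$) acts on tensor powers by $w(\mathbf v_{j_1}\otimes\cdots\otimes\mathbf v_{j_m})=\mathbf v_{w(j_1)}\otimes\cdots\otimes\mathbf v_{w(j_m)}$, and $W_{n-1}=\{w:w(n)=n\}$ is identified with the symmetric group on $\{1,\dots,n-1\}$. The value-type of $(i_1,\dots,i_m)$ is the set-partition of $\{1,\dots,m\}$ with parts the nonempty sets $\{\alpha:i_\alpha=j\}$; $\ell$ denotes number of parts. $\mathbf V(\Lambda)\subseteq\mathbf V^{\otimes r}$ is spanned by simple tensors $\mathbf v_{i_1}\otimes\cdots\otimes\mathbf v_{i_r}$ of value-type $\Lambda$; $\mathbf V'(\Lambda')$ is spanned by $\mathbf v_{i_1}\otimes\cdots\otimes\mathbf v_{i_r}\otimes\mathbf v_n$ with $(i_1,\dots,i_r,n)$ of value-type $\Lambda'$. For $1\le l\le m$, $H_m(l)$ is the $\Bbbk W_m$-submodule of $\mathbf V_m^{\otimes l}$ (where $\mathbf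 V_m$ is free with basis $\mathbf v_1,\dots,\mathbf v_m$) generated by $\mathbf v_{m-l+1}\otimes\cdots\otimes\mathbf v_m$; $H_m(0)=\mathbf V_m^{\otimes 0}=\Bbbk$ with trivial action. *)

theory Defs
  imports Main "HOL-Library.Disjoint_Sets" "HOL-Combinatorics.Permutations"
begin

text \<open>Elements of the tensor power V^{\<otimes>m} (V free on v_1..v_n) are represented by their
  coefficient functions on index words: a function f :: nat list \<Rightarrow> 'k which vanishes
  outside words of length m with letters in {1..n}.\<close>

definition tens :: "nat \<Rightarrow> nat \<Rightarrow> (nat list \<Rightarrow> 'k::ring_1) set" where
  "tens n m = {f. \<forall>xs. f xs \<noteq> 0 \<longrightarrow> length xs = m \<and> set xs \<subseteq> {1..n}}"

definition madd :: "(nat list \<Rightarrow> 'k::ring_1) \<Rightarrow> (nat list \<Rightarrow> 'k) \<Rightarrow> nat list \<Rightarrow> 'k" where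
  "madd f g = (\<lambda>xs. f xs + g xs)"

definition msmult :: "'k::ring_1 \<Rightarrow> (nat list \<Rightarrow> 'k) \<Rightarrow> nat list \<Rightarrow> 'k" where
  "msmult c f = (\<lambda>xs. c * f xs)"

definition mzero :: "nat list \<Rightarrow> 'k::ring_1" where
  "mzero = (\<lambda>xs. 0)"

text \<open>Action of a permutation w: w(v_{j_1}\<otimes>...\<otimes>v_{j_m}) = v_{w j_1}\<otimes>...\<otimes>v_{w j_m}.\<close>
definition pact :: "(nat \<Rightarrow> nat) \<Rightarrow> (nat list \<Rightarrow> 'k::ring_1) \<Rightarrow> nat list \<Rightarrow> 'k" where
  "pact w f = (\<lambda>xs. f (map (inv w) xs))"

definition simple_tensor :: "nat list \<Rightarrow> nat list \<Rightarrow> 'k::ring_1" where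
  "simple_tensor ys = (\<lambda>xs. if xs = ys then 1 else 0)"

definition Wgrp :: "nat \<Rightarrow> (nat \<Rightarrow> nat) set" where
  "Wgrp n = {w. w permutes {1..n}}"

definition valtype :: "nat list \<Rightarrow> nat set set" where
  "valtype xs = {{a \<in> {1..length xs}. xs ! (a - 1) = j} | j. j \<in> set xs}"

definition Vsub :: "nat \<Rightarrow> nat \<Rightarrow> nat set set \<Rightarrow> (nat list \<Rightarrow> 'k::ring_1) set" where
  "Vsub n r \<Lambda> = {f. \<forall>xs. f xs \<noteq> 0 \<longrightarrow>
      length xs = r \<and> set xs \<subseteq> {1..n} \<and> valtype xs = \<Lambda>}"

definition Vsub' :: "nat \<Rightarrow> nat \<Rightarrow> nat set set \<Rightarrow> (nat list \<Rightarrow> 'k::ring_1) set" where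
  "Vsub' n r \<Lambda>' = {f. \<forall>xs. f xs \<noteq> 0 \<longrightarrow>
      length xs = Suc r \<and> set xs \<subseteq> {1..n} \<and> last xs = n \<and> valtype xs = \<Lambda>'}"

text \<open>H_m(l): the kW_m-submodule of V_m^{\<otimes>l} generated by v_{m-l+1}\<otimes>...\<otimes>v_m
  (for l = 0 the generator is the empty tensor 1 \<in> k = V_m^{\<otimes>0}, giving H_m(0) = k
  with trivial action).\<close>
inductive_set Hmod :: "nat \<Rightarrow> nat \<Rightarrow> (nat list \<Rightarrow> 'k::ring_1) set" for m l where
  gen: "simple_tensor [Suc (m - l)..<Suc m] \<in> Hmod m l"
| zero: "mzero \<in> Hmod m l"
| add: "f \<in> Hmod m l \<Longrightarrow> g \<in> Hmod m l \<Longrightarrow> madd f g \<in> Hmod m l"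
| smult: "f \<in> Hmod m l \<Longrightarrow> msmult c f \<in> Hmod m l"
| act: "f \<in> Hmod m l \<Longrightarrow> w \<in> Wgrp m \<Longrightarrow> pact w f \<in> Hmod m l"

definition kW_iso :: "(nat \<Rightarrow> nat) set \<Rightarrow> (nat list \<Rightarrow> 'k::ring_1) set \<Rightarrow> (nat list \<Rightarrow> 'k) set \<Rightarrow> bool" where
  "kW_iso W A B \<longleftrightarrow> (\<exists>\<phi>. bij_betw \<phi> A B
      \<and> (\<forall>f\<in>A. \<forall>g\<in>A. \<phi> (madd f g) = madd (\<phi> f) (\<phi> g))
      \<and> (\<forall>c. \<forall>f\<in>A. \<phi> (msmult c f) = msmult c (\<phi> f))
      \<and> (\<forall>w\<in>W. \<forall>f\<in>A. \<phi> (pact w f) = pact w (\<phi> f)))"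

end

theory Submission
  imports Defs
begin

text \<open>Both modules are spaces of coefficient functions supported on a \<open>W\<close>-stable set of words,
  so a \<open>W\<close>-equivariant bijection between the two sets of words induces the isomorphism.
  \<open>H\<^sub>m(l)\<close> is spanned by the simple tensors of all injective words of length \<open>l\<close> in \<open>{1..m}\<close>,
  because \<open>W\<^sub>m\<close> acts transitively on these words. A word of value-type \<open>\<Lambda>\<close> is determined by the
  injective word listing its letters block by block, which gives (a). For (b) the block containing
  \<open>r + 1\<close> is listed last; its letter is then \<open>n\<close>, which \<open>W\<^sub>n\<^sub>-\<^sub>1\<close> fixes, so it can be dropped.\<close>

definition supported_on :: "nat list set \<Rightarrow> (nat list \<Rightarrow> 'k::ring_1) set" where
  "supported_on S = {f. \<forall>xs. f xs \<noteq> 0 \<longrightarrow> xs \<in> S}"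

lemma mzero_in_supported_on: "mzero \<in> supported_on S"
  by (simp add: supported_on_def mzero_def)

lemma madd_in_supported_on:
  "f \<in> supported_on S \<Longrightarrow> g \<in> supported_on S \<Longrightarrow> madd f g \<in> supported_on S"
  by (simp add: supported_on_def madd_def) (metis add.right_neutral)

lemma msmult_in_supported_on: "f \<in> supported_on S \<Longrightarrow> msmult c f \<in> supported_on S"
  by (simp add: supported_on_def msmult_def) (metis mult_zero_right)

lemma kW_iso_supported_onI:
  assumes bij: "bij_betw \<gamma> T S"
    and closed: "\<And>w ys. w \<in> W \<Longrightarrow> map (inv w) ys \<in> T \<longleftrightarrow> ys \<in> T"
    and equivariant: "\<And>w ys. w \<in> W \<Longrightarrow> ys \<in> T \<Longrightarrow> \<gamma> (map (inv w) ys) = map (inv w) (\<gamma> ys)"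
  shows "kW_iso W (supported_on S :: (nat list \<Rightarrow> 'k::ring_1) set) (supported_on T)"
proof -
  define \<phi> :: "(nat list \<Rightarrow> 'k) \<Rightarrow> nat list \<Rightarrow> 'k" where
    "\<phi> f = (\<lambda>ys. if ys \<in> T then f (\<gamma> ys) else 0)" for f
  define \<psi> :: "(nat list \<Rightarrow> 'k) \<Rightarrow> nat list \<Rightarrow> 'k" where
    "\<psi> g = (\<lambda>xs. if xs \<in> S then g (inv_into T \<gamma> xs) else 0)" for g
  have inj: "inj_on \<gamma> T" and img: "\<gamma> ` T = S"
    using bij by (auto simp: bij_betw_def)
  have "bij_betw \<phi> (supported_on S) (supported_on T)"
  proof (rule bij_betw_byWitness[where f' = \<psi>])
    show "\<forall>f\<in>supported_on S. \<psi> (\<phi> f) = f"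
      using img inj by (auto simp: \<phi>_def \<psi>_def supported_on_def fun_eq_iff f_inv_into_f inv_into_into)
    show "\<forall>g\<in>supported_on T. \<phi> (\<psi> g) = g"
      using img inj by (auto simp: \<phi>_def \<psi>_def supported_on_def fun_eq_iff)
    show "\<phi> ` supported_on S \<subseteq> supported_on T" "\<psi> ` supported_on T \<subseteq> supported_on S"
      by (auto simp: \<phi>_def \<psi>_def supported_on_def split: if_splits)
  qed
  moreover have "\<phi> (madd f g) = madd (\<phi> f) (\<phi> g)" "\<phi> (msmult c f) = msmult c (\<phi> f)" for f g c
    by (auto simp: \<phi>_def madd_def msmult_def)
  moreover have "\<phi> (pact w f) = pact w (\<phi> f)" if "w \<in> W" for w f
    using that by (auto simp: \<phi>_def pact_def closed equivariant)
  ultimately show ?thesis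
    unfolding kW_iso_def by blast
qed

lemma supported_on_subset:
  fixes M :: "(nat list \<Rightarrow> 'k::ring_1) set"
  assumes "finite S"
    and "mzero \<in> M"
    and "\<And>f g. f \<in> M \<Longrightarrow> g \<in> M \<Longrightarrow> madd f g \<in> M"
    and "\<And>c f. f \<in> M \<Longrightarrow> msmult c f \<in> M"
    and "\<And>xs. xs \<in> S \<Longrightarrow> simple_tensor xs \<in> M"
  shows "supported_on S \<subseteq> M"
  using assms(1) subset_refl
proof (induction S rule: finite_subset_induct)
  case empty
  have "f = mzero" if "f \<in> supported_on {}" for f :: "nat list \<Rightarrow> 'k"
    using that by (auto simp: supported_on_def mzero_def)
  then show ?case
    using assms(2) by blast
next
  case (insert xs F)
  show ?case
  proof
    fix f :: "nat list \<Rightarrow> 'k" assume f: "f \<in> supported_on (insert xs F)"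
    have "f = madd (msmult (f xs) (simple_tensor xs)) (f(xs := 0))"
      by (auto simp: madd_def msmult_def simple_tensor_def)
    moreover have "f(xs := 0) \<in> supported_on F"
      using f by (auto simp: supported_on_def)
    ultimately show "f \<in> M"
      using insert assms(3-5) by (metis subsetD)
  qed
qed

definition injective_words :: "nat \<Rightarrow> nat \<Rightarrow> nat list set" where
  "injective_words m l = {ys. length ys = l \<and> distinct ys \<and> set ys \<subseteq> {1..m}}"

lemma finite_injective_words: "finite (injective_words m l)"
  by (rule finite_subset[OF _ finite_lists_length_eq[of "{1..m}" l]])
    (auto simp: injective_words_def)

lemma map_permutes_in_injective_words:
  assumes "u permutes {1..m}" "ys \<in> injective_words m l"
  shows "map u ys \<in> injective_words m l"
proof -
  have "inj_on u (set ys)"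
    using permutes_inj[OF assms(1)] by (rule inj_on_subset) simp
  then show ?thesis
    using assms permutes_image[OF assms(1)] by (auto simp: injective_words_def distinct_map)
qed

lemma map_inv_in_injective_words_iff:
  assumes "w \<in> Wgrp m"
  shows "map (inv w) ys \<in> injective_words m l \<longleftrightarrow> ys \<in> injective_words m l"
proof -
  have w: "w permutes {1..m}" and w': "inv w permutes {1..m}"
    using assms permutes_inv by (auto simp: Wgrp_def)
  have "map w (map (inv w) ys) = ys"
    using permutes_inverses(1)[OF w] by (simp add: comp_def)
  then show ?thesis
    using map_permutes_in_injective_words[OF w] map_permutes_in_injective_words[OF w']
    by metis
qed

lemma injective_words_transitive:
  assumes xs: "xs \<in> injective_words m l" and ys: "ys \<in> injective_words m l"
  obtains w where "w permutes {1..m}" "map w xs = ys"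
proof -
  have dx: "distinct xs" "length xs = l" "set xs \<subseteq> {1..m}"
    and dy: "distinct ys" "length ys = l" "set ys \<subseteq> {1..m}"
    using xs ys by (auto simp: injective_words_def)
  have bx: "bij_betw ((!) xs) {..<l} (set xs)" and bys: "bij_betw ((!) ys) {..<l} (set ys)"
    using dx dy by (auto intro: bij_betw_nth)
  define u where "u x = ys ! inv_into {..<l} ((!) xs) x" for x
  have u: "bij_betw u (set xs) (set ys)"
    unfolding u_def using bij_betw_trans[OF bij_betw_inv_into[OF bx] bys] by (simp add: comp_def)
  have "card ({1..m} - set xs) = card ({1..m} - set ys)"
    using dx dy by (simp add: card_Diff_subset distinct_card)
  then obtain v where v: "bij_betw v ({1..m} - set xs) ({1..m} - set ys)"
    by (metis finite_same_card_bij finite_Diff finite_atLeastAtMost)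
  define w where "w x = (if x \<in> set xs then u x else if x \<in> {1..m} then v x else x)" for x
  have "bij_betw w (set xs) (set ys)"
    using u by (rule bij_betw_cong[THEN iffD1, rotated]) (simp add: w_def)
  moreover have "bij_betw w ({1..m} - set xs) ({1..m} - set ys)"
    using v by (rule bij_betw_cong[THEN iffD1, rotated]) (simp add: w_def)
  ultimately have "bij_betw w (set xs \<union> ({1..m} - set xs)) (set ys \<union> ({1..m} - set ys))"
    by (rule bij_betw_combine) blast
  then have "bij_betw w {1..m} {1..m}"
    using dx dy by (simp add: Un_absorb1)
  then have "w permutes {1..m}"
    by (rule bij_imp_permutes) (use dx in \<open>auto simp: w_def\<close>)
  moreover have "map w xs = ys"
  proof (rule nth_equalityI)
    fix i assume "i < length (map w xs)"
    then have "i < l" using dx by simp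
    moreover have "inv_into {..<l} ((!) xs) (xs ! i) = i" if "i < l"
      using bx that by (simp add: bij_betw_def inv_into_f_f)
    ultimately show "map w xs ! i = ys ! i"
      using dx by (simp add: w_def u_def)
  qed (use dx dy in simp)
  ultimately show thesis
    by (rule that)
qed

lemma pact_simple_tensor:
  assumes "bij w"
  shows "pact w (simple_tensor xs) = simple_tensor (map w xs)"
proof -
  have "map (inv w) (map w xs) = xs" "map w (map (inv w) ys) = ys" for ys
    using assms by (simp_all add: map_idI bij_is_inj bij_is_surj inv_f_f surj_f_inv_f)
  then have "map (inv w) ys = xs \<longleftrightarrow> ys = map w xs" for ys
    by metis
  then show ?thesis
    by (simp add: pact_def simple_tensor_def fun_eq_iff)
qed

lemma Hmod_subset_supported_on:
  assumes "l \<le> m" "f \<in> Hmod m l"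
  shows "f \<in> supported_on (injective_words m l)"
  using assms(2)
proof (induction rule: Hmod.induct)
  case gen
  then show ?case
    using assms(1) by (auto simp: supported_on_def simple_tensor_def injective_words_def)
next
  case (act f w)
  then show ?case
    by (auto simp: supported_on_def pact_def map_inv_in_injective_words_iff)
qed (simp_all add: mzero_in_supported_on madd_in_supported_on msmult_in_supported_on)

lemma simple_tensor_in_Hmod:
  assumes "l \<le> m" "ys \<in> injective_words m l"
  shows "(simple_tensor ys :: nat list \<Rightarrow> 'k::ring_1) \<in> Hmod m l"
proof -
  have "[Suc (m - l)..<Suc m] \<in> injective_words m l"
    using assms(1) by (auto simp: injective_words_def)
  then obtain w where w: "w permutes {1..m}" "map w [Suc (m - l)..<Suc m] = ys"
    using assms(2) by (rule injective_words_transitive)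
  have "pact w (simple_tensor [Suc (m - l)..<Suc m]) \<in> (Hmod m l :: (nat list \<Rightarrow> 'k) set)"
    using w(1) by (intro Hmod.act Hmod.gen) (simp add: Wgrp_def)
  then show ?thesis
    using w by (simp add: pact_simple_tensor permutes_bij)
qed

lemma Hmod_eq_supported_on:
  assumes "l \<le> m"
  shows "Hmod m l = supported_on (injective_words m l)"
proof
  show "Hmod m l \<subseteq> supported_on (injective_words m l)"
    using Hmod_subset_supported_on[OF assms] by blast
  show "supported_on (injective_words m l) \<subseteq> Hmod m l"
    using finite_injective_words
    by (rule supported_on_subset) (auto intro: Hmod.intros simple_tensor_in_Hmod[OF assms])
qed

definition words_of_type :: "nat \<Rightarrow> nat \<Rightarrow> nat set set \<Rightarrow> nat list set" where
  "words_of_type n r \<Lambda> = {xs. length xs = r \<and> set xs \<subseteq> {1..n} \<and> valtype xs = \<Lambda>}"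

lemma Vsub_eq_supported_on: "Vsub n r \<Lambda> = supported_on (words_of_type n r \<Lambda>)"
  by (auto simp: Vsub_def supported_on_def words_of_type_def)

lemma Vsub'_eq_supported_on:
  "Vsub' n r \<Lambda> = supported_on {xs \<in> words_of_type n (Suc r) \<Lambda>. last xs = n}"
  by (auto simp: Vsub'_def supported_on_def words_of_type_def)

locale block_enumeration =
  fixes r l :: nat and \<Lambda> :: "nat set set" and P :: "nat \<Rightarrow> nat set"
  assumes partition: "partition_on {1..r} \<Lambda>" and bij_blocks: "bij_betw P {0..<l} \<Lambda>"
begin

definition block_index :: "nat \<Rightarrow> nat" where
  "block_index a = (THE i. i < l \<and> a \<in> P i)"

definition expand :: "nat list \<Rightarrow> nat list" where
  "expand ys = map (\<lambda>a. ys ! block_index a) [1..<Suc r]"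

lemma block_in_partition: "i < l \<Longrightarrow> P i \<in> \<Lambda>"
  using bij_blocks by (auto simp: bij_betw_def)

lemma block_subset: "i < l \<Longrightarrow> P i \<subseteq> {1..r}"
  using block_in_partition partition_onD1[OF partition] by blast

lemma block_nonempty: "i < l \<Longrightarrow> P i \<noteq> {}"
  using block_in_partition partition_onD3[OF partition] by metis

lemma block_unique:
  assumes "i < l" "j < l" "a \<in> P i" "a \<in> P j"
  shows "i = j"
proof -
  have "P i = P j"
    using partition_onD2[OF partition] block_in_partition assms unfolding disjoint_def by blast
  then show ?thesis
    using bij_blocks assms(1,2) by (auto simp: bij_betw_def inj_on_def)
qed

lemma block_index_eq: "i < l \<Longrightarrow> a \<in> P i \<Longrightarrow> block_index a = i"
  unfolding block_index_def by (rule the_equality) (use block_unique in auto)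

lemma block_index:
  assumes "a \<in> {1..r}"
  shows "block_index a < l" "a \<in> P (block_index a)"
proof -
  have "a \<in> \<Union>\<Lambda>"
    using assms partition_onD1[OF partition] by blast
  then have "a \<in> \<Union> (P ` {0..<l})"
    using bij_blocks by (simp add: bij_betw_def)
  then obtain i where "i < l" "a \<in> P i"
    by auto
  then show "block_index a < l" "a \<in> P (block_index a)"
    using block_index_eq by auto
qed

lemma block_index_image: "block_index ` {1..r} = {0..<l}"
proof
  show "{0..<l} \<subseteq> block_index ` {1..r}"
  proof
    fix i assume i: "i \<in> {0..<l}"
    then obtain a where "a \<in> P i" using block_nonempty by auto
    then show "i \<in> block_index ` {1..r}"
      using block_index_eq block_subset i by force
  qed
qed (use block_index in auto)

lemma length_expand [simp]: "length (expand ys) = r"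
  by (simp add: expand_def del: upt_Suc)

lemma nth_expand: "a \<in> {1..r} \<Longrightarrow> expand ys ! (a - 1) = ys ! block_index a"
  by (auto simp: expand_def simp del: upt_Suc)

lemma expand_map: "expand (map u ys) = map u (expand ys)" if "length ys = l"
  using that block_index by (auto simp: expand_def)

lemma set_expand: "set (expand ys) = (\<lambda>a. ys ! block_index a) ` {1..r}"
  by (simp add: expand_def atLeastLessThanSuc_atLeastAtMost del: upt_Suc)

lemma last_expand:
  assumes "0 < r"
  shows "last (expand zs) = zs ! block_index r"
proof -
  have "last (expand zs) = expand zs ! (r - 1)"
    using assms by (metis last_conv_nth length_expand list.size(3) less_irrefl)
  also have "\<dots> = zs ! block_index r"
    using nth_expand[of r zs] assms by simp
  finally show ?thesis .
qed

lemma valtype_expand: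
  assumes "length ys = l" "distinct ys"
  shows "valtype (expand ys) = \<Lambda>"
proof -
  have fibre: "{a \<in> {1..r}. expand ys ! (a - 1) = ys ! block_index b} = P (block_index b)"
    if b: "b \<in> {1..r}" for b
  proof -
    have "expand ys ! (a - 1) = ys ! block_index b \<longleftrightarrow> block_index a = block_index b"
      if "a \<in> {1..r}" for a
      using nth_expand[OF that, of ys] block_index(1)[OF that] block_index(1)[OF b] assms
      by (simp add: nth_eq_iff_index_eq)
    then have "{a \<in> {1..r}. expand ys ! (a - 1) = ys ! block_index b}
        = {a \<in> {1..r}. block_index a = block_index b}"
      by blast
    also have "\<dots> = P (block_index b)"
      using block_index(2) block_subset[OF block_index(1)[OF b]] block_index_eq[OF block_index(1)[OF b]]
      by fastforce
    finally show ?thesis .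
  qed
  have "valtype (expand ys) =
      (\<lambda>j. {a \<in> {1..r}. expand ys ! (a - 1) = j}) ` ((\<lambda>a. ys ! block_index a) ` {1..r})"
    by (auto simp: valtype_def set_expand)
  also have "\<dots> = P ` block_index ` {1..r}"
    unfolding image_image by (rule image_cong[OF refl fibre])
  also have "\<dots> = \<Lambda>"
    unfolding block_index_image using bij_blocks by (simp add: bij_betw_def)
  finally show ?thesis .
qed

lemma expand_in_words_of_type:
  assumes "ys \<in> injective_words n l"
  shows "expand ys \<in> words_of_type n r \<Lambda>"
proof -
  have "set (expand ys) \<subseteq> set ys"
    using assms block_index(1) by (auto simp: set_expand injective_words_def)
  then show ?thesis
    using assms valtype_expand by (auto simp: words_of_type_def injective_words_def)
qed

lemma inj_on_expand: "inj_on expand {ys. length ys = l}"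
proof (rule inj_onI)
  fix ys zs assume ys: "ys \<in> {ys. length ys = l}" and zs: "zs \<in> {ys. length ys = l}"
    and eq: "expand ys = expand zs"
  show "ys = zs"
  proof (rule nth_equalityI)
    fix i assume "i < length ys"
    then have i: "i < l" using ys by simp
    obtain a where a: "a \<in> P i" using block_nonempty[OF i] by auto
    then have "a \<in> {1..r}" using block_subset[OF i] by auto
    then show "ys ! i = zs ! i"
      using eq nth_expand block_index_eq[OF i a] by metis
  qed (use ys zs in simp)
qed

lemma nth_eq_iff_block_index_eq:
  assumes xs: "xs \<in> words_of_type n r \<Lambda>" and a: "a \<in> {1..r}" and b: "b \<in> {1..r}"
  shows "xs ! (a - 1) = xs ! (b - 1) \<longleftrightarrow> block_index a = block_index b"
proof -
  define F where "F = {c \<in> {1..r}. xs ! (c - 1) = xs ! (a - 1)}"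
  have "xs ! (a - 1) \<in> set xs"
    using a xs by (auto simp: words_of_type_def)
  then have "F \<in> valtype xs"
    using xs unfolding F_def valtype_def words_of_type_def by auto
  then obtain i where i: "i < l" "F = P i"
    using xs bij_blocks unfolding words_of_type_def bij_betw_def by auto
  have "a \<in> P i"
    using a unfolding i(2)[symmetric] F_def by simp
  then have "block_index a = i"
    using i(1) block_index_eq by blast
  moreover have "b \<in> P i \<longleftrightarrow> block_index b = i"
    using i(1) block_index_eq block_index(2)[OF b] by blast
  moreover have "b \<in> F \<longleftrightarrow> xs ! (a - 1) = xs ! (b - 1)"
    using b by (auto simp: F_def)
  ultimately show ?thesis
    using i(2) by (simp add: eq_commute)
qed

lemma words_of_type_subset_expand:
  assumes xs: "xs \<in> words_of_type n r \<Lambda>"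
  shows "xs \<in> expand ` injective_words n l"
proof -
  have lx: "length xs = r" and sx: "set xs \<subseteq> {1..n}"
    using xs by (auto simp: words_of_type_def)
  define rep where "rep i = (SOME a. a \<in> P i)" for i
  have rep: "rep i \<in> P i" if "i < l" for i
    unfolding rep_def using block_nonempty[OF that] by (simp add: some_in_eq)
  have rep_range: "rep i \<in> {1..r}" if "i < l" for i
    using rep[OF that] block_subset[OF that] by blast
  define ys where "ys = map (\<lambda>i. xs ! (rep i - 1)) [0..<l]"
  have "inj_on (\<lambda>i. xs ! (rep i - 1)) {0..<l}"
  proof (rule inj_onI)
    fix i j assume i: "i \<in> {0..<l}" and j: "j \<in> {0..<l}"
      and "xs ! (rep i - 1) = xs ! (rep j - 1)"
    then have "block_index (rep i) = block_index (rep j)"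
      using nth_eq_iff_block_index_eq[OF xs rep_range rep_range] by simp
    then show "i = j"
      using i j rep block_index_eq by (metis atLeastLessThan_iff)
  qed
  then have "distinct ys"
    by (simp add: ys_def distinct_map)
  moreover have "xs ! (rep i - 1) \<in> set xs" if "i < l" for i
    using rep_range[OF that] lx by auto
  then have "set ys \<subseteq> {1..n}"
    using sx by (auto simp: ys_def)
  moreover have "length ys = l"
    by (simp add: ys_def)
  ultimately have "ys \<in> injective_words n l"
    by (simp add: injective_words_def)
  moreover have "expand ys = xs"
  proof (rule nth_equalityI)
    fix k assume "k < length (expand ys)"
    then have k: "Suc k \<in> {1..r}" by simp
    then have i: "block_index (Suc k) < l" by (rule block_index)
    have "expand ys ! k = xs ! (rep (block_index (Suc k)) - 1)"
      using nth_expand[OF k] i by (simp add: ys_def)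
    also have "\<dots> = xs ! k"
      using nth_eq_iff_block_index_eq[OF xs rep_range[OF i] k] block_index_eq[OF i rep[OF i]]
      by simp
    finally show "expand ys ! k = xs ! k" .
  qed (use lx in simp)
  ultimately show ?thesis
    by blast
qed

lemma bij_betw_expand: "bij_betw expand (injective_words n l) (words_of_type n r \<Lambda>)"
  unfolding bij_betw_def
proof
  show "inj_on expand (injective_words n l)"
    by (rule inj_on_subset[OF inj_on_expand]) (auto simp: injective_words_def)
  show "expand ` injective_words n l = words_of_type n r \<Lambda>"
    using expand_in_words_of_type words_of_type_subset_expand by blast
qed

end

lemma finite_partition_on: "partition_on A \<Lambda> \<Longrightarrow> finite A \<Longrightarrow> finite \<Lambda>"
  by (metis finite_UnionD partition_onD1)

lemma ex_bij_betw_nat_finite_last: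
  assumes "finite A" "x \<in> A"
  obtains f where "bij_betw f {0..<card A} A" "f (card A - 1) = x"
proof -
  obtain f where f: "bij_betw f {0..<card (A - {x})} (A - {x})"
    using ex_bij_betw_nat_finite assms(1) by blast
  have "0 < card A"
    using assms card_gt_0_iff by blast
  then have card: "card (A - {x}) = card A - 1" "{0..<card A} = {0..<card A - 1} \<union> {card A - 1}"
    using assms by auto
  define g where "g = f(card A - 1 := x)"
  have "bij_betw f {0..<card A - 1} (A - {x})"
    using f card(1) by simp
  then have "bij_betw g {0..<card A - 1} (A - {x})"
    by (rule bij_betw_cong[THEN iffD1, rotated]) (simp add: g_def)
  then have "bij_betw g ({0..<card A - 1} \<union> {card A - 1}) ((A - {x}) \<union> {g (card A - 1)})"
    using notIn_Un_bij_betw[of "card A - 1" "{0..<card A - 1}" g "A - {x}"] by (simp add: g_def)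
  moreover have "(A - {x}) \<union> {g (card A - 1)} = A"
    using assms(2) by (auto simp: g_def)
  ultimately have "bij_betw g {0..<card A} A"
    by (simp only: card(2))
  then show thesis
    using that by (simp add: g_def)
qed

lemma Vsub_kW_iso_Hmod:
  assumes partition: "partition_on {1..r} \<Lambda>" and "card \<Lambda> \<le> n"
  shows "kW_iso (Wgrp n) (Vsub n r \<Lambda> :: (nat list \<Rightarrow> 'k::ring_1) set) (Hmod n (card \<Lambda>))"
proof -
  obtain P where "bij_betw P {0..<card \<Lambda>} \<Lambda>"
    using ex_bij_betw_nat_finite finite_partition_on[OF partition] by blast
  then interpret block_enumeration r "card \<Lambda>" \<Lambda> P
    using partition by unfold_locales
  have "kW_iso (Wgrp n) (supported_on (words_of_type n r \<Lambda>) :: (nat list \<Rightarrow> 'k) set)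
      (supported_on (injective_words n (card \<Lambda>)))"
    using bij_betw_expand map_inv_in_injective_words_iff
  proof (rule kW_iso_supported_onI)
    fix w ys assume "ys \<in> injective_words n (card \<Lambda>)"
    then show "expand (map (inv w) ys) = map (inv w) (expand ys)"
      by (intro expand_map) (simp add: injective_words_def)
  qed
  then show ?thesis
    using assms by (simp add: Vsub_eq_supported_on Hmod_eq_supported_on)
qed

lemma Wgrp_inv_fixes: "w \<in> Wgrp m \<Longrightarrow> x \<notin> {1..m} \<Longrightarrow> inv w x = x"
  unfolding Wgrp_def by (metis mem_Collect_eq permutes_inv permutes_not_in)

lemma bij_betw_snoc_injective_words:
  assumes "0 < n" "0 < l"
  shows "bij_betw (\<lambda>ys. ys @ [n]) (injective_words (n - 1) (l - 1))
    {zs \<in> injective_words n l. last zs = n}"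
proof (rule bij_betw_byWitness[where f' = butlast])
  have "{1..n - 1} = {1..n} - {n}"
    using assms(1) by auto
  then have range: "set ys \<subseteq> {1..n - 1} \<longleftrightarrow> set ys \<subseteq> {1..n} \<and> n \<notin> set ys" for ys
    by blast
  have snoc: "butlast zs @ [n] = zs" if "zs \<in> injective_words n l" "last zs = n" for zs
    using that assms(2) append_butlast_last_id[of zs] by (auto simp: injective_words_def)
  show "\<forall>ys\<in>injective_words (n - 1) (l - 1). butlast (ys @ [n]) = ys"
    by simp
  show "\<forall>zs\<in>{zs \<in> injective_words n l. last zs = n}. butlast zs @ [n] = zs"
    using snoc by blast
  show "(\<lambda>ys. ys @ [n]) ` injective_words (n - 1) (l - 1) \<subseteq> {zs \<in> injective_words n l. last zs = n}"
    using assms unfolding injective_words_def range by (auto simp: subset_iff)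
  show "butlast ` {zs \<in> injective_words n l. last zs = n} \<subseteq> injective_words (n - 1) (l - 1)"
  proof (rule image_subsetI)
    fix zs assume "zs \<in> {zs \<in> injective_words n l. last zs = n}"
    then have "butlast zs @ [n] \<in> injective_words n l"
      using snoc by simp
    then show "butlast zs \<in> injective_words (n - 1) (l - 1)"
      unfolding injective_words_def range by auto
  qed
qed

lemma Vsub'_kW_iso_Hmod:
  assumes "0 < n" and partition: "partition_on {1..Suc r} \<Lambda>" and "card \<Lambda> \<le> n"
  shows "kW_iso (Wgrp (n - 1)) (Vsub' n r \<Lambda> :: (nat list \<Rightarrow> 'k::ring_1) set)
    (Hmod (n - 1) (card \<Lambda> - 1))"
proof -
  define l where "l = card \<Lambda>"
  have "Suc r \<in> {1..Suc r}"
    by simp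
  then have "Suc r \<in> \<Union>\<Lambda>"
    using partition_onD1[OF partition] by blast
  then obtain Q where Q: "Q \<in> \<Lambda>" "Suc r \<in> Q"
    by blast
  have finite: "finite \<Lambda>"
    using finite_partition_on[OF partition] by simp
  then have "0 < l"
    using Q by (auto simp: l_def card_gt_0_iff)
  obtain P where "bij_betw P {0..<l} \<Lambda>" and last_block: "P (l - 1) = Q"
    using ex_bij_betw_nat_finite_last[OF finite Q(1)] unfolding l_def by blast
  then interpret block_enumeration "Suc r" l \<Lambda> P
    using partition by unfold_locales
  have last_index: "block_index (Suc r) = l - 1"
    using block_index_eq[of "l - 1" "Suc r"] \<open>0 < l\<close> last_block Q(2) by simp
  have "last (expand zs) = last zs" if "length zs = l" for zs
    using last_expand[of zs] last_index that \<open>0 < l\<close>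
    by (metis last_conv_nth length_greater_0_conv zero_less_Suc)
  then have "bij_betw expand {zs \<in> injective_words n l. last zs = n}
      {xs \<in> words_of_type n (Suc r) \<Lambda>. last xs = n}"
    by (intro bij_betw_Collect[OF bij_betw_expand]) (simp add: injective_words_def)
  then have bij: "bij_betw (\<lambda>ys. expand (ys @ [n])) (injective_words (n - 1) (l - 1))
      {xs \<in> words_of_type n (Suc r) \<Lambda>. last xs = n}"
    using bij_betw_trans[OF bij_betw_snoc_injective_words[OF \<open>0 < n\<close> \<open>0 < l\<close>]] by (simp add: comp_def)
  have "kW_iso (Wgrp (n - 1)) (supported_on {xs \<in> words_of_type n (Suc r) \<Lambda>. last xs = n}
      :: (nat list \<Rightarrow> 'k) set) (supported_on (injective_words (n - 1) (l - 1)))"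
    using bij map_inv_in_injective_words_iff
  proof (rule kW_iso_supported_onI)
    fix w ys assume "w \<in> Wgrp (n - 1)" "ys \<in> injective_words (n - 1) (l - 1)"
    then show "expand (map (inv w) ys @ [n]) = map (inv w) (expand (ys @ [n]))"
      using \<open>0 < n\<close> \<open>0 < l\<close> expand_map[of "ys @ [n]" "inv w"] Wgrp_inv_fixes[of w "n - 1" n] by (simp add: injective_words_def)
  qed
  then show ?thesis
    using assms by (simp add: Vsub'_eq_supported_on Hmod_eq_supported_on l_def)
qed

theorem proposition4p10:
  fixes n r :: nat and \<Lambda> \<Lambda>' :: "nat set set"
    and k_type :: "'k::ring_1 itself"
  assumes "0 < n" and "0 < r"
    and "partition_on {1..r} \<Lambda>" and "card \<Lambda> \<le> n"
    and "partition_on {1..Suc r} \<Lambda>'" and "card \<Lambda>' \<le> n"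
  shows "kW_iso (Wgrp n) (Vsub n r \<Lambda> :: (nat list \<Rightarrow> 'k) set) (Hmod n (card \<Lambda>))
       \<and> kW_iso (Wgrp (n - 1)) (Vsub' n r \<Lambda>' :: (nat list \<Rightarrow> 'k) set) (Hmod (n - 1) (card \<Lambda>' - 1))"
  using Vsub_kW_iso_Hmod[OF assms(3,4)] Vsub'_kW_iso_Hmod[OF assms(1,5,6)] by blast

end
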